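(* Let $n \geqslant 5$ be odd and let $\lambda$ be a natural number with $\frac{n+3}{4} \leqslant \lambda \leqslant \frac{n-1}{2}$. Then the partition $\left(\lambda+1,\ \frac{n+3-2\lambda}{2},\ 2\times\left(\frac{n-1}{2}-\lambda\right),\ 1\times\frac{4\lambda-n-3}{2}\right)$ of $n$ corresponds to the eigenvalue $\lambda$.
   Context: In a partition, the notation $a\times t$ means that the part $a$ is repeated $t$ times (possibly $t=0$). An integer partition $(n_1,\dots,n_k)$ of $n$ (with $n_1\geqslant \dots\geqslant n_k\geqslant 1$, $\sum_j n_j=n$) is said to correspond to the eigenvalue $\lambda$ if $\lambda=\sum_{j=1}^k \frac{n_j(n_j-2j+1)}{2}$; this is the eigenvalue of the Transposition graph $T_n=\mathrm{Cay}(\mathrm{Sym}_n,T)$ ($T$ the set of all transpositions) associated with the irreducible character of $\mathrm{Sym}_n$ indexed by the partition. *)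

theory Defs
  imports Complex_Main
begin

definition is_partition :: "nat list \<Rightarrow> nat \<Rightarrow> bool" where
  "is_partition ps n \<longleftrightarrow> sorted_wrt (\<ge>) ps \<and> (\<forall>p\<in>set ps. p \<ge> 1) \<and> sum_list ps = n"

text \<open>Eigenvalue of the transposition graph attached to a partition:
  sum over j = 1..k of n_j (n_j - 2j + 1) / 2 (list index i = j - 1).\<close>
definition partition_eigenvalue :: "nat list \<Rightarrow> real" where
  "partition_eigenvalue ps =
     (\<Sum>i<length ps. real (ps ! i) * (real (ps ! i) - 2 * real (i + 1) + 1) / 2)"

definition corresponds_to :: "nat list \<Rightarrow> nat \<Rightarrow> real \<Rightarrow> bool" where
  "corresponds_to ps n lam \<longleftrightarrow> is_partition ps n \<and> partition_eigenvalue ps = lam"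

end

theory Submission
  imports Defs
begin

text \<open>With \<open>t = (n - 1)/2 - \<lambda>\<close> and \<open>u = 2\<lambda> - (n + 3)/2\<close> (both natural numbers
  exactly under the hypotheses) the partition consists of a row \<open>\<lambda> + 1\<close>, a row \<open>t + 2\<close>,
  \<open>t\<close> rows of length 2 and \<open>u\<close> rows of length 1, and \<open>\<lambda> = t + u + 2\<close>.
  A block of \<open>k\<close> rows of length \<open>c\<close> starting below row \<open>r\<close> contributes
  \<open>k c (c - 2r - k) / 2\<close> to the eigenvalue, and adding up the four contributions
  gives exactly \<open>\<lambda>\<close>.\<close>

definition partition_eigenvalue_from :: "nat \<Rightarrow> nat list \<Rightarrow> real" where
  "partition_eigenvalue_from r ps =
     (\<Sum>i<length ps. real (ps ! i) * (real (ps ! i) - 2 * real (i + r + 1) + 1) / 2)"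

lemma partition_eigenvalue_eq_from_0: "partition_eigenvalue ps = partition_eigenvalue_from 0 ps"
  by (simp add: partition_eigenvalue_def partition_eigenvalue_from_def)

lemma partition_eigenvalue_from_Nil [simp]: "partition_eigenvalue_from r [] = 0"
  by (simp add: partition_eigenvalue_from_def)

lemma partition_eigenvalue_from_Cons:
  "partition_eigenvalue_from r (x # xs) =
     real x * (real x - 2 * real r - 1) / 2 + partition_eigenvalue_from (Suc r) xs"
  unfolding partition_eigenvalue_from_def length_Cons sum.lessThan_Suc_shift
  by (simp add: algebra_simps)

lemma partition_eigenvalue_from_append:
  "partition_eigenvalue_from r (xs @ ys) =
     partition_eigenvalue_from r xs + partition_eigenvalue_from (r + length xs) ys"
  by (induction xs arbitrary: r) (simp_all add: partition_eigenvalue_from_Cons)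

lemma partition_eigenvalue_from_replicate:
  "partition_eigenvalue_from r (replicate k c) =
     real k * real c * (real c - 2 * real r - real k) / 2"
proof (induction k arbitrary: r)
  case (Suc k)
  show ?case
    using Suc.IH [of "Suc r"] by (simp add: partition_eigenvalue_from_Cons field_simps)
qed simp

lemma sorted_wrt_replicate: "R x x \<Longrightarrow> sorted_wrt R (replicate k x)"
  by (induction k) auto

lemma corresponds_to_two_rows_replicate:
  assumes "lam = t + u + 2"
  shows "corresponds_to ([lam + 1, t + 2] @ replicate t 2 @ replicate u 1)
           (2 * lam + 2 * t + 1) (real lam)"
proof -
  have "is_partition ([lam + 1, t + 2] @ replicate t 2 @ replicate u 1) (2 * lam + 2 * t + 1)"
    using assms by (auto simp: is_partition_def sorted_wrt_append sorted_wrt_replicate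
        sum_list_replicate)
  moreover have "partition_eigenvalue ([lam + 1, t + 2] @ replicate t 2 @ replicate u 1) = real lam"
    using assms by (simp add: partition_eigenvalue_eq_from_0 partition_eigenvalue_from_append
        partition_eigenvalue_from_Cons partition_eigenvalue_from_replicate field_simps)
  ultimately show ?thesis
    by (simp add: corresponds_to_def)
qed

theorem lemma5:
  fixes n lam :: nat
  assumes "odd n" and "n \<ge> 5"
    and "real (n + 3) / 4 \<le> real lam" and "real lam \<le> (real n - 1) / 2"
  shows "corresponds_to
           ([lam + 1, (n + 3 - 2 * lam) div 2]
             @ replicate ((n - 1) div 2 - lam) 2
             @ replicate ((4 * lam - n - 3) div 2) 1)
           n (real lam)"
proof -
  obtain m where n: "n = 2 * m + 1"
    using assms(1) oddE by blast
  define t where "t = m - lam"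
  define u where "u = 2 * lam - m - 2"
  have lam: "lam = t + u + 2" and n_lam_t: "n = 2 * lam + 2 * t + 1"
    using assms(3,4) unfolding n t_def u_def by simp_all
  have parts: "(n + 3 - 2 * lam) div 2 = t + 2" "(n - 1) div 2 - lam = t"
    "(4 * lam - n - 3) div 2 = u"
    using n_lam_t lam by simp_all
  show ?thesis
    unfolding parts unfolding n_lam_t using corresponds_to_two_rows_replicate [OF lam] .
qed

end
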